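(* Let $(G,P,\Delta)$ be a Garside structure of finite type on a group $G$, and let $S$ be its set of simple elements. Then $$\langle S\setminus\{e\}\mid s\cdot t=st \text{ for all } s,t\in S\setminus\{e\} \text{ such that } st\in S\rangle$$ is a restricted triangular presentation of $G$.
   Context: A Garside structure $(G,P,\Delta)$ on a group $G$ consists of a submonoid $P$ with $P\cap P^{-1}=\{e\}$ and an element $\Delta\in P$ such that: (i) the partial order $a\le_L b\iff a^{-1}b\in P$ is a lattice order on $G$; (ii) the set of simple elements $[e,\Delta]=\{a\in G\mid e\le_L a\le_L\Delta\}$ generates $P$; (iii) $\Delta^{-1}P\Delta=P$; (iv) for every $x\in P\setminus\{e\}$, $\sup\{k\mid x=a_1\cdots a_k,\ a_i\in P\setminus\{e\}\}<\infty$. It is of finite type if $[e,\Delta]$ is finite. A presentation $\langle T\mid R\rangle$ of $G$ ($T\subset G$ a finite generating set) is a restricted triangular presentation if: $T\cap T^{-1}=\emptyset$; $R=\{a\cdot b\cdot c^{-1}\mid a,b,c\in T,\ abc^{-1}=e\text{ in }G\}$ and $\langle T\mid R\rangle$ presents $G$; there are no $a,b,c\in T$ with $abc=e$ in $G$; and for $a,b,c\in T$, $abc\in T$ implies $ab\in T$ and $bc\in T$. *)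

theory Defs
  imports "HOL-Algebra.Group"
begin

definition leL :: "('a, 'b) monoid_scheme \<Rightarrow> 'a set \<Rightarrow> 'a \<Rightarrow> 'a \<Rightarrow> bool" where
  "leL G P a b \<longleftrightarrow> inv\<^bsub>G\<^esub> a \<otimes>\<^bsub>G\<^esub> b \<in> P"

definition lattice_order_on :: "'a set \<Rightarrow> ('a \<Rightarrow> 'a \<Rightarrow> bool) \<Rightarrow> bool" where
  "lattice_order_on A R \<longleftrightarrow>
     (\<forall>a\<in>A. R a a) \<and>
     (\<forall>a\<in>A. \<forall>b\<in>A. R a b \<and> R b a \<longrightarrow> a = b) \<and>
     (\<forall>a\<in>A. \<forall>b\<in>A. \<forall>c\<in>A. R a b \<and> R b c \<longrightarrow> R a c) \<and>
     (\<forall>a\<in>A. \<forall>b\<in>A. \<exists>s\<in>A. R a s \<and> R b s \<and> (\<forall>u\<in>A. R a u \<and> R b u \<longrightarrow> R s u)) \<and>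
     (\<forall>a\<in>A. \<forall>b\<in>A. \<exists>i\<in>A. R i a \<and> R i b \<and> (\<forall>l\<in>A. R l a \<and> R l b \<longrightarrow> R l i))"

definition lprod :: "('a, 'b) monoid_scheme \<Rightarrow> 'a list \<Rightarrow> 'a" where
  "lprod G xs = foldr (\<lambda>x acc. x \<otimes>\<^bsub>G\<^esub> acc) xs \<one>\<^bsub>G\<^esub>"

definition simples :: "('a, 'b) monoid_scheme \<Rightarrow> 'a set \<Rightarrow> 'a \<Rightarrow> 'a set" where
  "simples G P \<Delta> = {a \<in> carrier G. leL G P \<one>\<^bsub>G\<^esub> a \<and> leL G P a \<Delta>}"

definition garside_structure :: "('a, 'b) monoid_scheme \<Rightarrow> 'a set \<Rightarrow> 'a \<Rightarrow> bool" where
  "garside_structure G P \<Delta> \<longleftrightarrow>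
     group G \<and>
     \<comment> \<open>P is a submonoid of G\<close>
     P \<subseteq> carrier G \<and> \<one>\<^bsub>G\<^esub> \<in> P \<and> (\<forall>x\<in>P. \<forall>y\<in>P. x \<otimes>\<^bsub>G\<^esub> y \<in> P) \<and>
     \<comment> \<open>P \<inter> P^{-1} = {e}\<close>
     P \<inter> (\<lambda>x. inv\<^bsub>G\<^esub> x) ` P = {\<one>\<^bsub>G\<^esub>} \<and>
     \<Delta> \<in> P \<and>
     \<comment> \<open>(i) \<R>_L is a lattice order on G\<close>
     lattice_order_on (carrier G) (leL G P) \<and>
     \<comment> \<open>(ii) the simple elements generate P (as a monoid)\<close>
     P = {lprod G xs | xs. set xs \<subseteq> simples G P \<Delta>} \<and>
     \<comment> \<open>(iii) \<Delta>^{-1} P \<Delta> = P\<close>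
     (\<lambda>x. inv\<^bsub>G\<^esub> \<Delta> \<otimes>\<^bsub>G\<^esub> x \<otimes>\<^bsub>G\<^esub> \<Delta>) ` P = P \<and>
     \<comment> \<open>(iv) lengths of factorisations into nontrivial elements are bounded\<close>
     (\<forall>x \<in> P - {\<one>\<^bsub>G\<^esub>}.
        bdd_above {k. \<exists>xs. length xs = k \<and> set xs \<subseteq> P - {\<one>\<^bsub>G\<^esub>} \<and> lprod G xs = x})"

definition garside_finite_type :: "('a, 'b) monoid_scheme \<Rightarrow> 'a set \<Rightarrow> 'a \<Rightarrow> bool" where
  "garside_finite_type G P \<Delta> \<longleftrightarrow> garside_structure G P \<Delta> \<and> finite (simples G P \<Delta>)"

text \<open>Words over generators taken from G: a letter (x, True) stands for x, (x, False) for x^{-1}.\<close>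
type_synonym 'a word = "('a \<times> bool) list"

definition letter_val :: "('a, 'b) monoid_scheme \<Rightarrow> 'a \<times> bool \<Rightarrow> 'a" where
  "letter_val G l = (if snd l then fst l else inv\<^bsub>G\<^esub> (fst l))"

definition word_eval :: "('a, 'b) monoid_scheme \<Rightarrow> 'a word \<Rightarrow> 'a" where
  "word_eval G w = lprod G (map (letter_val G) w)"

inductive pres_step :: "'a set \<Rightarrow> 'a word set \<Rightarrow> 'a word \<Rightarrow> 'a word \<Rightarrow> bool"
  for T :: "'a set" and R :: "'a word set" where
  cancel: "a \<in> T \<Longrightarrow> pres_step T R (u @ [(a, b), (a, \<not> b)] @ v) (u @ v)"
| relator: "r \<in> R \<Longrightarrow> pres_step T R (u @ r @ v) (u @ v)"

text \<open>Equality in the group presented by \<langle>T | R\<rangle>: the equivalence generated by moves.\<close>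
definition pres_equiv :: "'a set \<Rightarrow> 'a word set \<Rightarrow> 'a word \<Rightarrow> 'a word \<Rightarrow> bool" where
  "pres_equiv T R = (symclp (pres_step T R))\<^sup>*\<^sup>*"

text \<open>\<langle>T | R\<rangle> presents G: T generates G, and every word in T^{\<pm>} evaluating to e in G
  is trivial in the presented group (i.e. the kernel of F(T) \<rightarrow> G is the normal closure of R).\<close>
definition presents :: "('a, 'b) monoid_scheme \<Rightarrow> 'a set \<Rightarrow> 'a word set \<Rightarrow> bool" where
  "presents G T R \<longleftrightarrow>
     (\<forall>r\<in>R. set r \<subseteq> T \<times> UNIV \<and> word_eval G r = \<one>\<^bsub>G\<^esub>) \<and>
     (\<forall>g\<in>carrier G. \<exists>w. set w \<subseteq> T \<times> UNIV \<and> word_eval G w = g) \<and>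
     (\<forall>w. set w \<subseteq> T \<times> UNIV \<and> word_eval G w = \<one>\<^bsub>G\<^esub> \<longrightarrow> pres_equiv T R w [])"

definition triangular_relators :: "('a, 'b) monoid_scheme \<Rightarrow> 'a set \<Rightarrow> 'a word set" where
  "triangular_relators G T =
     {[(a, True), (b, True), (c, False)] | a b c.
        a \<in> T \<and> b \<in> T \<and> c \<in> T \<and> a \<otimes>\<^bsub>G\<^esub> b \<otimes>\<^bsub>G\<^esub> inv\<^bsub>G\<^esub> c = \<one>\<^bsub>G\<^esub>}"

definition restricted_triangular_presentation ::
  "('a, 'b) monoid_scheme \<Rightarrow> 'a set \<Rightarrow> 'a word set \<Rightarrow> bool" where
  "restricted_triangular_presentation G T R \<longleftrightarrow>
     T \<subseteq> carrier G \<and> finite T \<and>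
     T \<inter> (\<lambda>x. inv\<^bsub>G\<^esub> x) ` T = {} \<and>
     R = triangular_relators G T \<and>
     presents G T R \<and>
     (\<nexists>a b c. a \<in> T \<and> b \<in> T \<and> c \<in> T \<and> a \<otimes>\<^bsub>G\<^esub> b \<otimes>\<^bsub>G\<^esub> c = \<one>\<^bsub>G\<^esub>) \<and>
     (\<forall>a\<in>T. \<forall>b\<in>T. \<forall>c\<in>T. a \<otimes>\<^bsub>G\<^esub> b \<otimes>\<^bsub>G\<^esub> c \<in> T \<longrightarrow>
        a \<otimes>\<^bsub>G\<^esub> b \<in> T \<and> b \<otimes>\<^bsub>G\<^esub> c \<in> T)"

end

theory Submission
  imports Defs
begin

(* Write T for the nontrivial simples. Every word over T and their inverses can be rewritten,
   using only the relations s t = st, into the form p \<Delta>^-k with p a positive word: a letter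
   s^-1 becomes (s^-1 \<Delta>) \<Delta>^-1, and \<Delta>^-1 moves to the right past a positive letter t by
   turning it into its \<Delta>-conjugate. So it suffices to show that two positive words with the
   same value are equivalent. If they start with s and t, let r be the least common multiple of
   s and t for the lattice order; r divides \<Delta>, hence is simple, and both words can be rewritten
   to r followed by one fixed positive word, by induction on the (bounded) length of
   factorisations of the common value. *)

section \<open>Moves on words\<close>

lemma pres_equiv_eq_equivclp: "pres_equiv T R = equivclp (pres_step T R)"
  by (simp add: pres_equiv_def equivclp_def)

lemma pres_equiv_refl [simp]: "pres_equiv T R w w"
  by (simp add: pres_equiv_eq_equivclp)

lemma pres_equiv_sym [sym]: "pres_equiv T R u v \<Longrightarrow> pres_equiv T R v u"
  by (simp add: pres_equiv_eq_equivclp equivclp_sym)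

lemma pres_equiv_trans [trans]:
  "pres_equiv T R u v \<Longrightarrow> pres_equiv T R v w \<Longrightarrow> pres_equiv T R u w"
  unfolding pres_equiv_eq_equivclp by (rule equivclp_trans)

lemma pres_step_append: "pres_step T R u v \<Longrightarrow> pres_step T R (x @ u @ y) (x @ v @ y)"
proof (induction rule: pres_step.induct)
  case (cancel a u' b v')
  show ?case using pres_step.cancel[OF cancel, where u = "x @ u'" and v = "v' @ y"] by simp
next
  case (relator r u' v')
  show ?case using pres_step.relator[OF relator, where u = "x @ u'" and v = "v' @ y"] by simp
qed

lemma pres_equiv_append: "pres_equiv T R u v \<Longrightarrow> pres_equiv T R (x @ u @ y) (x @ v @ y)"
  unfolding pres_equiv_eq_equivclp
  by (induction rule: equivclp_induct) (auto intro: equivclp_into_equivclp pres_step_append)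

lemma pres_equiv_append_left: "pres_equiv T R u v \<Longrightarrow> pres_equiv T R (x @ u) (x @ v)"
  using pres_equiv_append[of T R u v x "[]"] by simp

lemma pres_equiv_append_right: "pres_equiv T R u v \<Longrightarrow> pres_equiv T R (u @ y) (v @ y)"
  using pres_equiv_append[of T R u v "[]" y] by simp

lemma pres_equiv_cancel: "a \<in> T \<Longrightarrow> pres_equiv T R [(a, b), (a, \<not> b)] []"
  using pres_step.cancel[of a T R "[]" b "[]"] by (auto simp: pres_equiv_eq_equivclp)

lemma pres_equiv_insert_cancel:
  "a \<in> T \<Longrightarrow> pres_equiv T R (x @ y) (x @ [(a, b), (a, \<not> b)] @ y)"
  using pres_equiv_sym[OF pres_equiv_append[OF pres_equiv_cancel, where x = x and y = y]] by simp

lemma pres_equiv_relator: "r \<in> R \<Longrightarrow> pres_equiv T R r []"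
  using pres_step.relator[of r R T "[]" "[]"] by (auto simp: pres_equiv_eq_equivclp)

lemma pres_equiv_replicate_cancel:
  assumes "a \<in> T"
  shows "pres_equiv T R (replicate k (a, True) @ replicate k (a, False)) []"
proof (induction k)
  case (Suc k)
  have "replicate (Suc k) (a, True) @ replicate (Suc k) (a, False)
        = [(a, True)] @ (replicate k (a, True) @ replicate k (a, False)) @ [(a, False)]"
    by (simp add: replicate_append_same[symmetric])
  also have "pres_equiv T R \<dots> ([(a, True)] @ [] @ [(a, False)])"
    by (rule pres_equiv_append[OF Suc.IH])
  also have "pres_equiv T R \<dots> []"
    using pres_equiv_cancel[OF assms, where b = True] by simp
  finally show ?case .
qed simp

section \<open>Evaluating words in a group\<close>

lemma lprod_Nil [simp]: "lprod G [] = \<one>\<^bsub>G\<^esub>"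
  by (simp add: lprod_def)

lemma lprod_Cons [simp]: "lprod G (x # xs) = x \<otimes>\<^bsub>G\<^esub> lprod G xs"
  by (simp add: lprod_def)

lemma letter_val_True [simp]: "letter_val G (a, True) = a"
  by (simp add: letter_val_def)

lemma letter_val_False [simp]: "letter_val G (a, False) = inv\<^bsub>G\<^esub> a"
  by (simp add: letter_val_def)

lemma word_eval_Nil [simp]: "word_eval G [] = \<one>\<^bsub>G\<^esub>"
  by (simp add: word_eval_def)

lemma word_eval_Cons [simp]: "word_eval G (l # w) = letter_val G l \<otimes>\<^bsub>G\<^esub> word_eval G w"
  by (simp add: word_eval_def)

definition word_inv :: "'a word \<Rightarrow> 'a word" where
  "word_inv w = rev (map (\<lambda>(a, b). (a, \<not> b)) w)"

lemma set_word_inv_subset: "set w \<subseteq> A \<times> UNIV \<Longrightarrow> set (word_inv w) \<subseteq> A \<times> UNIV"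
  by (auto simp: word_inv_def)

context group
begin

lemma mult_inv_cancel_left [simp]:
  "x \<in> carrier G \<Longrightarrow> y \<in> carrier G \<Longrightarrow> x \<otimes> (inv x \<otimes> y) = y"
  by (simp add: m_assoc[symmetric])

lemma inv_mult_cancel_left [simp]:
  "x \<in> carrier G \<Longrightarrow> y \<in> carrier G \<Longrightarrow> inv x \<otimes> (x \<otimes> y) = y"
  by (simp add: m_assoc[symmetric])

lemma lprod_closed: "set xs \<subseteq> carrier G \<Longrightarrow> lprod G xs \<in> carrier G"
  by (induction xs) auto

lemma letter_val_closed: "fst l \<in> carrier G \<Longrightarrow> letter_val G l \<in> carrier G"
  by (auto simp: letter_val_def)

lemma word_eval_closed: "set w \<subseteq> carrier G \<times> UNIV \<Longrightarrow> word_eval G w \<in> carrier G"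
  by (induction w) (auto intro!: letter_val_closed)

lemma word_eval_append:
  "set u \<subseteq> carrier G \<times> UNIV \<Longrightarrow> set v \<subseteq> carrier G \<times> UNIV \<Longrightarrow>
    word_eval G (u @ v) = word_eval G u \<otimes> word_eval G v"
  by (induction u) (auto simp: m_assoc word_eval_closed letter_val_closed)

lemma word_eval_word_inv:
  "set w \<subseteq> carrier G \<times> UNIV \<Longrightarrow> word_eval G (word_inv w) = inv (word_eval G w)"
proof (induction w)
  case (Cons l w)
  obtain a b where l: "l = (a, b)" by force
  have a: "a \<in> carrier G" and w: "set w \<subseteq> carrier G \<times> UNIV" using Cons.prems l by auto
  have "word_eval G (word_inv (l # w)) = word_eval G (word_inv w @ [(a, \<not> b)])"
    by (simp add: word_inv_def l)
  also have "\<dots> = inv (word_eval G w) \<otimes> letter_val G (a, \<not> b)"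
    using Cons.IH w a set_word_inv_subset[OF w] word_eval_append[of "word_inv w" "[(a, \<not> b)]"]
    by (simp add: letter_val_closed)
  also have "\<dots> = inv (letter_val G (a, b) \<otimes> word_eval G w)"
    using a word_eval_closed[OF w] by (cases b) (simp_all add: inv_mult_group)
  finally show ?case using l by simp
qed (simp add: word_inv_def)

lemma pres_step_word_eval:
  assumes "pres_step T R u v" and T: "T \<subseteq> carrier G"
    and R: "\<And>r. r \<in> R \<Longrightarrow> set r \<subseteq> T \<times> UNIV \<and> word_eval G r = \<one>"
  shows "(set u \<subseteq> T \<times> UNIV \<longleftrightarrow> set v \<subseteq> T \<times> UNIV) \<and>
    (set u \<subseteq> T \<times> UNIV \<longrightarrow> word_eval G u = word_eval G v)"
  using assms(1)
proof induction
  case (cancel a x b y)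
  have a: "a \<in> carrier G" using cancel T by blast
  show ?case
  proof (intro conjI impI)
    show "set (x @ [(a, b), (a, \<not> b)] @ y) \<subseteq> T \<times> UNIV \<longleftrightarrow> set (x @ y) \<subseteq> T \<times> UNIV"
      using cancel by auto
    assume "set (x @ [(a, b), (a, \<not> b)] @ y) \<subseteq> T \<times> UNIV"
    then have x: "set x \<subseteq> carrier G \<times> UNIV" and y: "set y \<subseteq> carrier G \<times> UNIV"
      using T by auto
    have "word_eval G ((a, b) # (a, \<not> b) # y) = word_eval G y"
      using a word_eval_closed[OF y] by (cases b) auto
    then show "word_eval G (x @ [(a, b), (a, \<not> b)] @ y) = word_eval G (x @ y)"
      using a x y word_eval_append[of x "(a, b) # (a, \<not> b) # y"] word_eval_append[of x y] by simp
  qed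
next
  case (relator r x y)
  have r: "set r \<subseteq> T \<times> UNIV" "word_eval G r = \<one>" using R[OF relator] by auto
  show ?case
  proof (intro conjI impI)
    show "set (x @ r @ y) \<subseteq> T \<times> UNIV \<longleftrightarrow> set (x @ y) \<subseteq> T \<times> UNIV"
      using r by auto
    assume "set (x @ r @ y) \<subseteq> T \<times> UNIV"
    then have "set x \<subseteq> carrier G \<times> UNIV" "set r \<subseteq> carrier G \<times> UNIV" "set y \<subseteq> carrier G \<times> UNIV"
      using T by auto
    then show "word_eval G (x @ r @ y) = word_eval G (x @ y)"
      using r word_eval_append[of x "r @ y"] word_eval_append[of r y] word_eval_append[of x y]
        word_eval_closed[of y] by simp
  qed
qed

lemma pres_equiv_word_eval:
  assumes "pres_equiv T R u v" and "set u \<subseteq> T \<times> UNIV" and "T \<subseteq> carrier G"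
    and "\<And>r. r \<in> R \<Longrightarrow> set r \<subseteq> T \<times> UNIV \<and> word_eval G r = \<one>"
  shows "set v \<subseteq> T \<times> UNIV \<and> word_eval G u = word_eval G v"
  using assms(1,2) unfolding pres_equiv_eq_equivclp
proof (induction rule: equivclp_induct)
  case (step v w)
  then show ?case using pres_step_word_eval[of T R v w] pres_step_word_eval[of T R w v] assms(3,4)
    by auto
qed simp

end

locale garside =
  fixes G (structure) and P :: "'a set" and \<Delta> :: 'a
  assumes garside: "garside_structure G P \<Delta>"
begin

(* The axioms are extracted with elim conjE rather than the simplifier: the generation axiom
   P = {lprod G xs | xs. set xs \<subseteq> simples G P \<Delta>} has P on both sides, so simp loops on it. *)

sublocale group G
  using garside unfolding garside_structure_def by (elim conjE) assumption

abbreviation S where "S \<equiv> simples G P \<Delta>"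

definition factor_lengths :: "'a \<Rightarrow> nat set" where
  "factor_lengths x = {k. \<exists>xs. length xs = k \<and> set xs \<subseteq> P - {\<one>} \<and> lprod G xs = x}"

lemma P_closed: "x \<in> P \<Longrightarrow> x \<in> carrier G"
proof -
  have "P \<subseteq> carrier G"
    using garside unfolding garside_structure_def by (elim conjE) assumption
  then show "x \<in> P \<Longrightarrow> x \<in> carrier G" by blast
qed

lemma one_in_P: "\<one> \<in> P"
  using garside unfolding garside_structure_def by (elim conjE) assumption

lemma P_mult_closed: "x \<in> P \<Longrightarrow> y \<in> P \<Longrightarrow> x \<otimes> y \<in> P"
proof -
  have "\<forall>x\<in>P. \<forall>y\<in>P. x \<otimes> y \<in> P"
    using garside unfolding garside_structure_def by (elim conjE) assumption
  then show "x \<in> P \<Longrightarrow> y \<in> P \<Longrightarrow> x \<otimes> y \<in> P" by blast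
qed

lemma lprod_in_P: "set xs \<subseteq> P \<Longrightarrow> lprod G xs \<in> P"
  by (induction xs) (auto intro: P_mult_closed one_in_P)

lemma Delta_in_P: "\<Delta> \<in> P"
  using garside unfolding garside_structure_def by (elim conjE) assumption

lemma Delta_closed [simp]: "\<Delta> \<in> carrier G"
  using Delta_in_P P_closed by blast

lemma P_generated_by_simples: assumes "p \<in> P" obtains xs where "set xs \<subseteq> S" "lprod G xs = p"
proof -
  have "P = {lprod G xs | xs. set xs \<subseteq> S}"
    using garside unfolding garside_structure_def by (elim conjE) assumption
  then have "p \<in> {lprod G xs | xs. set xs \<subseteq> S}"
    using arg_cong[where f = "\<lambda>A. p \<in> A"] assms by blast
  then show ?thesis using that by blast
qed

lemma Delta_conj_in_P: "x \<in> P \<Longrightarrow> inv \<Delta> \<otimes> x \<otimes> \<Delta> \<in> P"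
proof -
  have "(\<lambda>x. inv \<Delta> \<otimes> x \<otimes> \<Delta>) ` P = P"
    using garside unfolding garside_structure_def by (elim conjE) assumption
  then show "x \<in> P \<Longrightarrow> inv \<Delta> \<otimes> x \<otimes> \<Delta> \<in> P" by blast
qed

lemma factor_lengths_bdd: "x \<in> P - {\<one>} \<Longrightarrow> bdd_above (factor_lengths x)"
proof -
  have "\<forall>x\<in>P - {\<one>}.
      bdd_above {k. \<exists>xs. length xs = k \<and> set xs \<subseteq> P - {\<one>} \<and> lprod G xs = x}"
    using garside unfolding garside_structure_def by (elim conjE) assumption
  then show "x \<in> P - {\<one>} \<Longrightarrow> bdd_above (factor_lengths x)"
    unfolding factor_lengths_def by (rule bspec)
qed

lemma lattice_sup_exists:
  assumes "a \<in> carrier G" "b \<in> carrier G"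
  obtains r where "r \<in> carrier G" "inv a \<otimes> r \<in> P" "inv b \<otimes> r \<in> P"
    "\<And>w. w \<in> carrier G \<Longrightarrow> inv a \<otimes> w \<in> P \<Longrightarrow> inv b \<otimes> w \<in> P \<Longrightarrow> inv r \<otimes> w \<in> P"
proof -
  have "lattice_order_on (carrier G) (leL G P)"
    using garside unfolding garside_structure_def by (elim conjE) assumption
  then have "\<forall>a\<in>carrier G. \<forall>b\<in>carrier G. \<exists>s\<in>carrier G. leL G P a s \<and> leL G P b s \<and>
      (\<forall>u\<in>carrier G. leL G P a u \<and> leL G P b u \<longrightarrow> leL G P s u)"
    unfolding lattice_order_on_def by (elim conjE) assumption
  then obtain r where "r \<in> carrier G" "leL G P a r" "leL G P b r"
    "\<forall>w\<in>carrier G. leL G P a w \<and> leL G P b w \<longrightarrow> leL G P r w"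
    using assms by blast
  then show ?thesis using that unfolding leL_def by blast
qed

lemma P_inv_in_P: assumes "x \<in> P" "inv x \<in> P" shows "x = \<one>"
proof -
  have "P \<inter> (\<lambda>x. inv x) ` P = {\<one>}"
    using garside unfolding garside_structure_def by (elim conjE) assumption
  then have "inv x = \<one>" using assms by blast
  then show ?thesis using assms P_closed by simp
qed

lemma P_mult_eq_one: assumes "a \<in> P" "b \<in> P" "a \<otimes> b = \<one>" shows "a = \<one>" "b = \<one>"
proof -
  have "inv b = a" using assms P_closed inv_equality by blast
  then have "b = \<one>" using assms P_inv_in_P by blast
  then show "a = \<one>" "b = \<one>" using assms P_closed by auto
qed

lemma simples_iff: "s \<in> S \<longleftrightarrow> s \<in> P \<and> inv s \<otimes> \<Delta> \<in> P"
  using P_closed by (auto simp: simples_def leL_def)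

lemma simples_in_P: "s \<in> S \<Longrightarrow> s \<in> P"
  by (simp add: simples_iff)

lemma simples_closed: "s \<in> S \<Longrightarrow> s \<in> carrier G"
  by (simp add: simples_iff P_closed)

lemma simple_right_factor:
  assumes "a \<in> P" "b \<in> P" "a \<otimes> b \<in> S" shows "b \<in> S"
proof -
  have "inv (a \<otimes> b) \<otimes> \<Delta> \<otimes> (inv \<Delta> \<otimes> a \<otimes> \<Delta>) \<in> P"
    using assms simples_iff P_mult_closed Delta_conj_in_P by blast
  also have "inv (a \<otimes> b) \<otimes> \<Delta> \<otimes> (inv \<Delta> \<otimes> a \<otimes> \<Delta>) = inv b \<otimes> \<Delta>"
    using assms P_closed by (simp add: inv_mult_group m_assoc)
  finally show ?thesis using assms simples_iff by blast
qed

lemma simple_left_factor: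
  assumes "a \<in> P" "b \<in> P" "a \<otimes> b \<in> S" shows "a \<in> S"
proof -
  have "b \<otimes> (inv (a \<otimes> b) \<otimes> \<Delta>) \<in> P"
    using assms simples_iff P_mult_closed by blast
  also have "b \<otimes> (inv (a \<otimes> b) \<otimes> \<Delta>) = inv a \<otimes> \<Delta>"
    using assms P_closed by (simp add: inv_mult_group m_assoc)
  finally show ?thesis using assms simples_iff by blast
qed

lemma Delta_simple: "\<Delta> \<in> S"
  using Delta_in_P one_in_P by (simp add: simples_iff)

definition complement :: "'a \<Rightarrow> 'a" where
  "complement s = inv s \<otimes> \<Delta>"

definition Delta_conj :: "'a \<Rightarrow> 'a" where
  "Delta_conj t = inv \<Delta> \<otimes> t \<otimes> \<Delta>"

lemma mult_complement: "s \<in> carrier G \<Longrightarrow> s \<otimes> complement s = \<Delta>"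
  by (simp add: complement_def)

lemma complement_mult_Delta_conj: "t \<in> carrier G \<Longrightarrow> complement t \<otimes> Delta_conj t = \<Delta>"
  by (simp add: complement_def Delta_conj_def m_assoc)

lemma complement_simple: assumes "s \<in> S" shows "complement s \<in> S"
proof -
  have "complement s \<in> P" using assms by (simp add: simples_iff complement_def)
  then show ?thesis
    using assms simple_right_factor[of s "complement s"] Delta_simple
    by (simp add: simples_in_P simples_closed mult_complement)
qed

lemma Delta_conj_simple: assumes "t \<in> S" shows "Delta_conj t \<in> S"
proof -
  have "complement t \<in> P" "Delta_conj t \<in> P"
    using assms Delta_conj_in_P simples_iff by (auto simp: complement_def Delta_conj_def)
  then show ?thesis
    using assms simple_right_factor[of "complement t" "Delta_conj t"] Delta_simple
    by (simp add: simples_closed complement_mult_Delta_conj)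
qed

section \<open>Positive words in the simple generators\<close>

abbreviation T where "T \<equiv> S - {\<one>}"

abbreviation R where
  "R \<equiv> {[(s, True), (t, True), (s \<otimes> t, False)] | s t. s \<in> T \<and> t \<in> T \<and> s \<otimes> t \<in> S}"

abbreviation equiv_words (infix "\<approx>" 50) where
  "u \<approx> v \<equiv> pres_equiv T R u v"

abbreviation positive_word :: "'a word \<Rightarrow> bool" where
  "positive_word w \<equiv> set w \<subseteq> T \<times> {True}"

lemma T_closed: "t \<in> T \<Longrightarrow> t \<in> carrier G"
  by (simp add: simples_closed)

lemma T_in_P: "t \<in> T \<Longrightarrow> t \<in> P"
  by (simp add: simples_in_P)

lemma T_subset_carrier: "T \<subseteq> carrier G"
  using T_closed by blast

lemma T_word_closed: "set w \<subseteq> T \<times> UNIV \<Longrightarrow> set w \<subseteq> carrier G \<times> UNIV"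
  using T_closed by auto

lemma positive_word_closed: "positive_word w \<Longrightarrow> set w \<subseteq> carrier G \<times> UNIV"
  using T_closed by auto

lemma mult_in_T: "s \<in> T \<Longrightarrow> t \<in> P \<Longrightarrow> s \<otimes> t \<in> S \<Longrightarrow> s \<otimes> t \<in> T"
  using P_mult_eq_one(1)[of s t] T_in_P[of s] by blast

lemma Delta_in_T: assumes t: "t \<in> T" shows "\<Delta> \<in> T"
proof -
  have "\<Delta> \<noteq> \<one>"
  proof
    assume Delta: "\<Delta> = \<one>"
    have "inv t \<otimes> \<Delta> \<in> P" using t simples_iff by blast
    then have "inv t \<in> P" using Delta T_closed[OF t] by simp
    then show False using t P_inv_in_P T_in_P by blast
  qed
  then show ?thesis using Delta_simple by blast
qed

lemma complement_in_T: assumes s: "s \<in> T" and "s \<noteq> \<Delta>" shows "complement s \<in> T"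
proof -
  have "complement s \<noteq> \<one>"
  proof
    assume "complement s = \<one>"
    then have "s = \<Delta>" using mult_complement[OF T_closed[OF s]] T_closed[OF s] by simp
    then show False using \<open>s \<noteq> \<Delta>\<close> by simp
  qed
  then show ?thesis using s complement_simple by blast
qed

lemma Delta_conj_in_T: assumes t: "t \<in> T" shows "Delta_conj t \<in> T"
proof -
  have "Delta_conj t \<noteq> \<one>"
  proof
    assume "Delta_conj t = \<one>"
    then have "inv t \<otimes> \<Delta> = \<Delta>"
      using complement_mult_Delta_conj[OF T_closed[OF t]] T_closed[OF t] by (simp add: complement_def)
    then show False using t T_closed[OF t] by simp
  qed
  then show ?thesis using t Delta_conj_simple by blast
qed

lemma relator_word_eval: assumes "r \<in> R" shows "set r \<subseteq> T \<times> UNIV \<and> word_eval G r = \<one>"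
proof -
  obtain s t where r: "r = [(s, True), (t, True), (s \<otimes> t, False)]"
    and st: "s \<in> T" "t \<in> T" "s \<otimes> t \<in> S"
    using assms by blast
  have closed: "s \<in> carrier G" "t \<in> carrier G" using T_closed st by blast+
  have "s \<otimes> t \<in> T" using mult_in_T[OF st(1) T_in_P[OF st(2)] st(3)] .
  then have "set r \<subseteq> T \<times> UNIV" using r st(1,2) by simp
  moreover have "word_eval G r = s \<otimes> t \<otimes> inv (s \<otimes> t)"
    using closed by (simp add: r m_assoc[symmetric])
  ultimately show ?thesis using closed by simp
qed

lemma equiv_words_word_eval:
  "u \<approx> v \<Longrightarrow> set u \<subseteq> T \<times> UNIV \<Longrightarrow> set v \<subseteq> T \<times> UNIV \<and> word_eval G u = word_eval G v"
  by (rule pres_equiv_word_eval[OF _ _ T_subset_carrier relator_word_eval])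

lemma letters_mult_equiv:
  assumes "s \<in> T" "t \<in> T" "s \<otimes> t \<in> S"
  shows "[(s, True), (t, True)] \<approx> [(s \<otimes> t, True)]"
proof -
  have "s \<otimes> t \<in> T" using assms mult_in_T T_in_P by blast
  then have "[(s, True), (t, True)] \<approx> [(s, True), (t, True), (s \<otimes> t, False), (s \<otimes> t, True)]"
    using pres_equiv_insert_cancel[where b = False and x = "[(s, True), (t, True)]" and y = "[]"]
    by simp
  also have "\<dots> = [(s, True), (t, True), (s \<otimes> t, False)] @ [(s \<otimes> t, True)]"
    by simp
  also have "\<dots> \<approx> [] @ [(s \<otimes> t, True)]"
    using assms by (intro pres_equiv_append_right pres_equiv_relator) blast
  finally show ?thesis by simp
qed

lemma inv_mult_letter_equiv:
  assumes "a \<in> T" "b \<in> T" "a \<otimes> b \<in> S"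
  shows "[(a \<otimes> b, False), (a, True)] \<approx> [(b, False)]"
proof -
  have ab: "a \<otimes> b \<in> T" using assms mult_in_T T_in_P by blast
  have "[(a \<otimes> b, False), (a, True)] \<approx> [(a \<otimes> b, False), (a, True), (b, True), (b, False)]"
    using pres_equiv_insert_cancel[OF assms(2), where b = True and x = "[(a \<otimes> b, False), (a, True)]"
        and y = "[]"] by simp
  also have "\<dots> = [(a \<otimes> b, False)] @ [(a, True), (b, True)] @ [(b, False)]"
    by simp
  also have "\<dots> \<approx> [(a \<otimes> b, False)] @ [(a \<otimes> b, True)] @ [(b, False)]"
    using assms by (intro pres_equiv_append letters_mult_equiv)
  also have "\<dots> = [] @ [(a \<otimes> b, False), (a \<otimes> b, True)] @ [(b, False)]"
    by simp
  also have "\<dots> \<approx> [] @ [] @ [(b, False)]"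
    using pres_equiv_cancel[OF ab, where b = False] by (intro pres_equiv_append) simp
  finally show ?thesis by simp
qed

lemma letter_inv_mult_equiv:
  assumes "a \<in> T" "b \<in> T" "a \<otimes> b \<in> S"
  shows "[(b, True), (a \<otimes> b, False)] \<approx> [(a, False)]"
proof -
  have ab: "a \<otimes> b \<in> T" using assms mult_in_T T_in_P by blast
  have "[(b, True), (a \<otimes> b, False)] \<approx> [(a, False), (a, True), (b, True), (a \<otimes> b, False)]"
    using pres_equiv_insert_cancel[OF assms(1), where b = False and x = "[]"
        and y = "[(b, True), (a \<otimes> b, False)]"] by simp
  also have "\<dots> = [(a, False)] @ [(a, True), (b, True)] @ [(a \<otimes> b, False)]"
    by simp
  also have "\<dots> \<approx> [(a, False)] @ [(a \<otimes> b, True)] @ [(a \<otimes> b, False)]"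
    using assms by (intro pres_equiv_append letters_mult_equiv)
  also have "\<dots> = [(a, False)] @ [(a \<otimes> b, True), (a \<otimes> b, False)] @ []"
    by simp
  also have "\<dots> \<approx> [(a, False)] @ [] @ []"
    using pres_equiv_cancel[OF ab, where b = True] by (intro pres_equiv_append) simp
  finally show ?thesis by simp
qed

lemma positive_word_eval: "positive_word w \<Longrightarrow> word_eval G w = lprod G (map fst w)"
  by (induction w) auto

lemma positive_word_fst_in_P: "positive_word w \<Longrightarrow> set (map fst w) \<subseteq> P - {\<one>}"
  using simples_in_P by fastforce

lemma positive_word_eval_in_P: "positive_word w \<Longrightarrow> word_eval G w \<in> P"
  using positive_word_eval[of w] lprod_in_P[of "map fst w"] positive_word_fst_in_P[of w] by auto

lemma length_in_factor_lengths: "positive_word w \<Longrightarrow> length w \<in> factor_lengths (word_eval G w)"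
  unfolding factor_lengths_def using positive_word_eval[of w] positive_word_fst_in_P[of w]
  by (intro CollectI exI[of _ "map fst w"]) auto

lemma factor_lengths_one: "k \<in> factor_lengths \<one> \<Longrightarrow> k = 0"
proof -
  assume "k \<in> factor_lengths \<one>"
  then obtain xs where xs: "length xs = k" "set xs \<subseteq> P - {\<one>}" "lprod G xs = \<one>"
    unfolding factor_lengths_def by blast
  show "k = 0"
  proof (cases xs)
    case (Cons a ys)
    then show ?thesis using xs P_mult_eq_one[of a "lprod G ys"] lprod_in_P[of ys] by auto
  qed (use xs in simp)
qed

lemma factor_lengths_mult:
  assumes "k \<in> factor_lengths z" "s \<in> P - {\<one>}" shows "Suc k \<in> factor_lengths (s \<otimes> z)"
proof -
  obtain xs where "length xs = k" "set xs \<subseteq> P - {\<one>}" "lprod G xs = z"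
    using assms(1) unfolding factor_lengths_def by blast
  then show ?thesis unfolding factor_lengths_def using assms(2) by (intro CollectI exI[of _ "s # xs"]) auto
qed

lemma factor_lengths_bounded: assumes "x \<in> P" obtains n where "factor_lengths x \<subseteq> {..n}"
proof (cases "x = \<one>")
  case True
  then show ?thesis using that factor_lengths_one by blast
next
  case False
  then show ?thesis
    using that factor_lengths_bdd assms unfolding bdd_above_def by (auto simp: subset_eq)
qed

lemma P_positive_word: assumes "p \<in> P" obtains w where "positive_word w" "word_eval G w = p"
proof -
  obtain xs where xs: "set xs \<subseteq> S" "lprod G xs = p"
    by (rule P_generated_by_simples[OF assms])
  define w where "w = map (\<lambda>a. (a, True)) (filter (\<lambda>a. a \<noteq> \<one>) xs)"
  have "positive_word w" using xs(1) by (auto simp: w_def)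
  moreover have "word_eval G w = lprod G xs"
    unfolding w_def using xs(1)
  proof (induction xs)
    case (Cons a xs)
    have "a \<in> carrier G" "lprod G xs \<in> carrier G"
      using Cons.prems simples_closed by (auto intro!: lprod_closed)
    then show ?case using Cons by simp
  qed simp
  ultimately show ?thesis using that xs(2) by simp
qed

definition simple_word :: "'a \<Rightarrow> 'a word" where
  "simple_word a = (if a = \<one> then [] else [(a, True)])"

lemma simple_word_positive: "a \<in> S \<Longrightarrow> positive_word (simple_word a)"
  by (auto simp: simple_word_def)

lemma word_eval_simple_word: "a \<in> carrier G \<Longrightarrow> word_eval G (simple_word a) = a"
  by (auto simp: simple_word_def)

lemma letter_simple_word_equiv:
  assumes "s \<in> T" "a \<in> S" "s \<otimes> a \<in> S"
  shows "(s, True) # simple_word a \<approx> simple_word (s \<otimes> a)"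
proof (cases "a = \<one>")
  case True
  then show ?thesis using assms T_closed by (simp add: simple_word_def)
next
  case False
  then have "s \<otimes> a \<noteq> \<one>" using assms mult_in_T simples_in_P by blast
  then show ?thesis using False letters_mult_equiv assms by (simp add: simple_word_def)
qed

lemma positive_words_equiv_through_lcm:
  assumes IH: "\<And>u v. factor_lengths (word_eval G u) \<subseteq> {..m} \<Longrightarrow> positive_word u \<Longrightarrow>
      positive_word v \<Longrightarrow> word_eval G u = word_eval G v \<Longrightarrow> u \<approx> v"
    and bound: "factor_lengths (s \<otimes> word_eval G u) \<subseteq> {..Suc m}"
    and s: "s \<in> T" and u: "positive_word u"
    and r: "r \<in> S" "inv s \<otimes> r \<in> P"
    and y: "positive_word y" "word_eval G y = inv r \<otimes> (s \<otimes> word_eval G u)"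
  shows "(s, True) # u \<approx> simple_word r @ y"
proof -
  have s_closed: "s \<in> carrier G" and r_closed: "r \<in> carrier G"
    using T_closed[OF s] simples_closed[OF r(1)] .
  have u_closed: "word_eval G u \<in> carrier G"
    using word_eval_closed[OF positive_word_closed[OF u]] .
  define s' where "s' = inv s \<otimes> r"
  have ss': "s \<otimes> s' = r" using s_closed r_closed by (simp add: s'_def)
  have s': "s' \<in> S"
    using simple_right_factor[OF T_in_P[OF s] r(2)] ss' r(1) by (simp add: s'_def)
  have s'y: "positive_word (simple_word s' @ y)"
    using simple_word_positive[OF s'] y(1) by simp
  have "word_eval G (simple_word s' @ y) = s' \<otimes> (inv r \<otimes> (s \<otimes> word_eval G u))"
    using word_eval_append[OF positive_word_closed[OF simple_word_positive[OF s']]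
        positive_word_closed[OF y(1)]] word_eval_simple_word[OF simples_closed[OF s']] y(2)
    by simp
  also have "\<dots> = word_eval G u"
    using s_closed r_closed u_closed by (simp add: s'_def m_assoc)
  finally have ev: "word_eval G (simple_word s' @ y) = word_eval G u" .
  have "factor_lengths (word_eval G u) \<subseteq> {..m}"
  proof
    fix k assume "k \<in> factor_lengths (word_eval G u)"
    then have "Suc k \<in> factor_lengths (s \<otimes> word_eval G u)"
      using factor_lengths_mult s T_in_P by blast
    then show "k \<in> {..m}" using bound by auto
  qed
  then have "u \<approx> simple_word s' @ y"
    using IH u s'y ev by simp
  then have "(s, True) # u \<approx> ((s, True) # simple_word s') @ y"
    using pres_equiv_append_left[of _ _ u _ "[(s, True)]"] by simp
  also have "\<dots> \<approx> simple_word r @ y"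
    using pres_equiv_append_right[OF letter_simple_word_equiv[OF s s']] ss' r(1) by simp
  finally show ?thesis .
qed

lemma positive_words_equiv_bounded:
  "factor_lengths (word_eval G u) \<subseteq> {..n} \<Longrightarrow> positive_word u \<Longrightarrow> positive_word v \<Longrightarrow>
    word_eval G u = word_eval G v \<Longrightarrow> u \<approx> v"
proof (induction n arbitrary: u v)
  case 0
  have "length u \<in> {..0}"
    using subsetD[OF "0.prems"(1) length_in_factor_lengths[OF "0.prems"(2)]] .
  moreover have "factor_lengths (word_eval G v) \<subseteq> {..0}"
    using "0.prems"(1,4) by simp
  then have "length v \<in> {..0}"
    using subsetD length_in_factor_lengths[OF "0.prems"(3)] by blast
  ultimately show ?case by simp
next
  case (Suc m)
  show ?case
  proof (cases "u = [] \<or> v = []")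
    case True
    then have ev: "word_eval G u = \<one>" "word_eval G v = \<one>" using Suc.prems(4) by auto
    have "length u \<in> factor_lengths \<one>"
      using length_in_factor_lengths[OF Suc.prems(2)] ev(1) by simp
    moreover have "length v \<in> factor_lengths \<one>"
      using length_in_factor_lengths[OF Suc.prems(3)] ev(2) by simp
    ultimately have "u = []" "v = []" using factor_lengths_one by auto
    then show ?thesis by simp
  next
    case False
    then obtain s u' t v' where u: "u = (s, True) # u'" and v: "v = (t, True) # v'"
      using Suc.prems(2,3) by (cases u; cases v) auto
    define x where "x = word_eval G u"
    have s: "s \<in> T" and t: "t \<in> T" and u': "positive_word u'" and v': "positive_word v'"
      using Suc.prems(2,3) u v by auto
    have xu: "x = s \<otimes> word_eval G u'" and xv: "x = t \<otimes> word_eval G v'"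
      using Suc.prems(4) u v by (simp_all add: x_def)
    have x_closed: "x \<in> carrier G"
      unfolding x_def using word_eval_closed[OF positive_word_closed[OF Suc.prems(2)]] .
    have sx: "inv s \<otimes> x \<in> P"
      using xu T_closed[OF s] word_eval_closed[OF positive_word_closed[OF u']]
        positive_word_eval_in_P[OF u'] by simp
    have tx: "inv t \<otimes> x \<in> P"
      using xv T_closed[OF t] word_eval_closed[OF positive_word_closed[OF v']]
        positive_word_eval_in_P[OF v'] by simp
    obtain r where r: "r \<in> carrier G" "inv s \<otimes> r \<in> P" "inv t \<otimes> r \<in> P"
      and r_least: "\<And>w. w \<in> carrier G \<Longrightarrow> inv s \<otimes> w \<in> P \<Longrightarrow> inv t \<otimes> w \<in> P \<Longrightarrow> inv r \<otimes> w \<in> P"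
      using lattice_sup_exists[OF T_closed[OF s] T_closed[OF t]] by blast
    have rx: "inv r \<otimes> x \<in> P" using r_least[OF x_closed sx tx] .
    have "s \<otimes> (inv s \<otimes> r) \<in> P" using P_mult_closed[OF T_in_P[OF s] r(2)] .
    then have "r \<in> P" using r(1) T_closed[OF s] by simp
    moreover have "inv r \<otimes> \<Delta> \<in> P"
      using r_least[OF Delta_closed] s t by (simp add: simples_iff)
    ultimately have rS: "r \<in> S" by (simp add: simples_iff)
    obtain y where y: "positive_word y" "word_eval G y = inv r \<otimes> x"
      using P_positive_word[OF rx] by blast
    have "u \<approx> simple_word r @ y"
      using positive_words_equiv_through_lcm[OF Suc.IH _ s u' rS r(2) y(1)] Suc.prems(1) y(2) u xu
      by (simp add: x_def)
    moreover have "v \<approx> simple_word r @ y"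
      using positive_words_equiv_through_lcm[OF Suc.IH _ t v' rS r(3) y(1)] Suc.prems(1,4) y(2) v xv
      by (simp add: x_def)
    ultimately show ?thesis using pres_equiv_trans[OF _ pres_equiv_sym] by blast
  qed
qed

lemma positive_words_equiv:
  assumes "positive_word u" "positive_word v" "word_eval G u = word_eval G v"
  shows "u \<approx> v"
proof -
  obtain n where "factor_lengths (word_eval G u) \<subseteq> {..n}"
    using factor_lengths_bounded positive_word_eval_in_P[OF assms(1)] by blast
  then show ?thesis using positive_words_equiv_bounded assms by blast
qed

section \<open>Arbitrary words in the simple generators\<close>

lemma Delta_inv_letter_swap:
  assumes t: "t \<in> T"
  shows "[(\<Delta>, False), (t, True)] \<approx> [(Delta_conj t, True), (\<Delta>, False)]"
proof (cases "t = \<Delta>")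
  case True
  have "[(\<Delta>, False), (\<Delta>, True)] \<approx> []" "[(\<Delta>, True), (\<Delta>, False)] \<approx> []"
    using pres_equiv_cancel[OF Delta_in_T[OF t], where b = False]
      pres_equiv_cancel[OF Delta_in_T[OF t], where b = True] by simp_all
  then have "[(\<Delta>, False), (\<Delta>, True)] \<approx> [(\<Delta>, True), (\<Delta>, False)]"
    by (blast intro: pres_equiv_trans pres_equiv_sym)
  moreover have "Delta_conj \<Delta> = \<Delta>" by (simp add: Delta_conj_def)
  ultimately show ?thesis using True by simp
next
  case False
  have t_closed: "t \<in> carrier G" using t T_closed by blast
  have c: "complement t \<in> T" using complement_in_T t False by blast
  have "[(\<Delta>, False), (t, True)] \<approx> [(complement t, False)]"
    using inv_mult_letter_equiv[OF t c] mult_complement[OF t_closed] Delta_simple by simp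
  moreover have "[(Delta_conj t, True), (\<Delta>, False)] \<approx> [(complement t, False)]"
    using letter_inv_mult_equiv[OF c Delta_conj_in_T[OF t]] complement_mult_Delta_conj[OF t_closed]
      Delta_simple by simp
  ultimately show ?thesis by (blast intro: pres_equiv_trans pres_equiv_sym)
qed

lemma inv_letter_equiv:
  assumes s: "s \<in> T"
  shows "[(s, False)] \<approx> simple_word (complement s) @ [(\<Delta>, False)]"
proof (cases "s = \<Delta>")
  case True
  then show ?thesis by (simp add: complement_def simple_word_def)
next
  case False
  have s_closed: "s \<in> carrier G" using s T_closed by blast
  have c: "complement s \<in> T" using complement_in_T s False by blast
  have "[(complement s, True), (\<Delta>, False)] \<approx> [(s, False)]"
    using letter_inv_mult_equiv[OF s c] mult_complement[OF s_closed] Delta_simple by simp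
  then show ?thesis using pres_equiv_sym c by (simp add: simple_word_def)
qed

lemma Delta_inv_positive_word_swap:
  "positive_word p \<Longrightarrow>
    positive_word (map (apfst Delta_conj) p) \<and> (\<Delta>, False) # p \<approx> map (apfst Delta_conj) p @ [(\<Delta>, False)]"
proof (induction p)
  case (Cons l p)
  then obtain t where l: "l = (t, True)" and t: "t \<in> T" and p: "positive_word p" by auto
  have IH: "(\<Delta>, False) # p \<approx> map (apfst Delta_conj) p @ [(\<Delta>, False)]"
    using Cons.IH p by blast
  have "(\<Delta>, False) # l # p = [(\<Delta>, False), (t, True)] @ p" using l by simp
  also have "\<dots> \<approx> [(Delta_conj t, True), (\<Delta>, False)] @ p"
    using Delta_inv_letter_swap[OF t] by (rule pres_equiv_append_right)
  also have "\<dots> = [(Delta_conj t, True)] @ (\<Delta>, False) # p" by simp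
  also have "\<dots> \<approx> [(Delta_conj t, True)] @ map (apfst Delta_conj) p @ [(\<Delta>, False)]"
    using IH by (rule pres_equiv_append_left)
  finally show ?case using Cons.IH p l Delta_conj_in_T[OF t] by simp
qed simp

lemma word_equiv_positive_Delta_inv_power:
  "set w \<subseteq> T \<times> UNIV \<Longrightarrow> \<exists>p k. positive_word p \<and> w \<approx> p @ replicate k (\<Delta>, False)"
proof (induction w)
  case Nil
  show ?case by (intro exI[of _ "[]"] exI[of _ 0]) simp
next
  case (Cons l w)
  obtain s b where l: "l = (s, b)" and s: "s \<in> T" using Cons.prems by force
  obtain p k where p: "positive_word p" and w: "w \<approx> p @ replicate k (\<Delta>, False)"
    using Cons by auto
  have lw: "l # w \<approx> [(s, b)] @ p @ replicate k (\<Delta>, False)"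
    using pres_equiv_append_left[OF w, of "[l]"] l by simp
  show ?case
  proof (cases b)
    case True
    then show ?thesis using lw s p by (intro exI[of _ "(s, b) # p"] exI[of _ k]) simp
  next
    case False
    let ?c = "simple_word (complement s)" and ?p = "map (apfst Delta_conj) p"
    have swap: "positive_word ?p" "(\<Delta>, False) # p \<approx> ?p @ [(\<Delta>, False)]"
      using Delta_inv_positive_word_swap[OF p] by blast+
    note lw
    also have "[(s, b)] @ p @ replicate k (\<Delta>, False) \<approx> (?c @ [(\<Delta>, False)]) @ p @ replicate k (\<Delta>, False)"
      using pres_equiv_append_right[OF inv_letter_equiv[OF s], of "p @ replicate k (\<Delta>, False)"] False
      by simp
    also have "\<dots> = ?c @ ((\<Delta>, False) # p) @ replicate k (\<Delta>, False)" by simp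
    also have "\<dots> \<approx> ?c @ (?p @ [(\<Delta>, False)]) @ replicate k (\<Delta>, False)"
      using swap(2) by (rule pres_equiv_append)
    also have "\<dots> = (?c @ ?p) @ replicate (Suc k) (\<Delta>, False)"
      by (simp add: replicate_append_same[symmetric])
    finally have "l # w \<approx> (?c @ ?p) @ replicate (Suc k) (\<Delta>, False)" .
    moreover have "positive_word (?c @ ?p)"
      using swap(1) simple_word_positive[OF complement_simple] s by auto
    ultimately show ?thesis by blast
  qed
qed

lemma word_eval_one_equiv_Nil:
  assumes w: "set w \<subseteq> T \<times> UNIV" and ev: "word_eval G w = \<one>"
  shows "w \<approx> []"
proof (cases w)
  case (Cons l w')
  then have Delta: "\<Delta> \<in> T" using w Delta_in_T by force
  obtain p k where p: "positive_word p" and wp: "w \<approx> p @ replicate k (\<Delta>, False)"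
    using word_equiv_positive_Delta_inv_power[OF w] by blast
  define a where "a = replicate k (\<Delta>, True)"
  define b where "b = replicate k (\<Delta>, False)"
  have a: "positive_word a" and b: "set b \<subseteq> T \<times> UNIV"
    using Delta by (auto simp: a_def b_def)
  have pc: "set p \<subseteq> carrier G \<times> UNIV" and ac: "set a \<subseteq> carrier G \<times> UNIV"
    and bc: "set b \<subseteq> carrier G \<times> UNIV"
    using positive_word_closed[OF p] positive_word_closed[OF a] T_word_closed[OF b] .
  have ab: "a @ b \<approx> []"
    unfolding a_def b_def using Delta by (rule pres_equiv_replicate_cancel)
  have "word_eval G (p @ b) = \<one>"
    using equiv_words_word_eval[OF wp w] ev by (simp add: b_def)
  then have "word_eval G p \<otimes> word_eval G b = \<one>"
    using word_eval_append[OF pc bc] by simp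
  then have p_inv_b: "inv (word_eval G b) = word_eval G p"
    using inv_equality word_eval_closed[OF bc] word_eval_closed[OF pc] by blast
  have "set (a @ b) \<subseteq> T \<times> UNIV" using a b by auto
  then have "word_eval G (a @ b) = \<one>"
    using equiv_words_word_eval[OF ab] by simp
  then have "word_eval G a \<otimes> word_eval G b = \<one>"
    using word_eval_append[OF ac bc] by simp
  then have "inv (word_eval G b) = word_eval G a"
    using inv_equality word_eval_closed[OF bc] word_eval_closed[OF ac] by blast
  then have "p \<approx> a"
    using positive_words_equiv[OF p a] p_inv_b by simp
  have "w \<approx> p @ b" using wp by (simp add: b_def)
  also have "\<dots> \<approx> a @ b" using \<open>p \<approx> a\<close> by (rule pres_equiv_append_right)
  also have "\<dots> \<approx> []" by (rule ab)
  finally show ?thesis .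
qed simp

lemma word_eval_surj: assumes g: "g \<in> carrier G" shows "\<exists>w. set w \<subseteq> T \<times> UNIV \<and> word_eval G w = g"
proof -
  obtain r where r: "r \<in> carrier G" "inv \<one> \<otimes> r \<in> P" "inv g \<otimes> r \<in> P"
    using lattice_sup_exists[OF one_closed g] by blast
  obtain u where u: "positive_word u" "word_eval G u = r"
    using P_positive_word r by auto
  obtain v where v: "positive_word v" "word_eval G v = inv g \<otimes> r"
    using P_positive_word[OF r(3)] by blast
  have vc: "set v \<subseteq> carrier G \<times> UNIV" using positive_word_closed[OF v(1)] .
  have "set (u @ word_inv v) \<subseteq> T \<times> UNIV"
    using u v set_word_inv_subset[of v T] by auto
  moreover have "word_eval G (u @ word_inv v) = r \<otimes> inv (inv g \<otimes> r)"
    using word_eval_append[OF positive_word_closed[OF u(1)] set_word_inv_subset[OF vc]]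
      word_eval_word_inv[OF vc] u v by simp
  moreover have "r \<otimes> inv (inv g \<otimes> r) = g"
    using r g by (simp add: inv_mult_group m_assoc)
  ultimately show ?thesis by metis
qed

lemma T_inv_disjoint: "T \<inter> (\<lambda>x. inv x) ` T = {}"
proof -
  have "t \<noteq> inv t'" if "t \<in> T" "t' \<in> T" for t t'
  proof
    assume "t = inv t'"
    then have "inv t \<in> P" using that T_closed T_in_P by simp
    then show False using that P_inv_in_P T_in_P by blast
  qed
  then show ?thesis by blast
qed

lemma relators_triangular: "R = triangular_relators G T"
proof -
  have "a \<otimes> b \<otimes> inv c = \<one> \<longleftrightarrow> c = a \<otimes> b" if "a \<in> T" "b \<in> T" "c \<in> T" for a b c
    using inv_solve_right'[of \<one> "a \<otimes> b" c] that T_closed by auto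
  then show ?thesis
    unfolding triangular_relators_def using mult_in_T T_in_P by blast
qed

lemma presents_T_R: "presents G T R"
  unfolding presents_def
proof (intro conjI ballI allI impI)
  show "set r \<subseteq> T \<times> UNIV" "word_eval G r = \<one>" if "r \<in> R" for r
    using relator_word_eval[OF that] by blast+
  show "\<exists>w. set w \<subseteq> T \<times> UNIV \<and> word_eval G w = g" if "g \<in> carrier G" for g
    using word_eval_surj[OF that] .
  show "w \<approx> []" if "set w \<subseteq> T \<times> UNIV \<and> word_eval G w = \<one>" for w
    using word_eval_one_equiv_Nil that by blast
qed

lemma no_product_of_three_is_one: "\<nexists>a b c. a \<in> T \<and> b \<in> T \<and> c \<in> T \<and> a \<otimes> b \<otimes> c = \<one>"
proof
  assume "\<exists>a b c. a \<in> T \<and> b \<in> T \<and> c \<in> T \<and> a \<otimes> b \<otimes> c = \<one>"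
  then obtain a b c where abc: "a \<in> T" "b \<in> T" "c \<in> T" and prod: "a \<otimes> b \<otimes> c = \<one>"
    by blast
  have "a \<otimes> b = \<one>"
    using P_mult_eq_one(1)[OF P_mult_closed[OF T_in_P T_in_P] T_in_P prod] abc .
  then have "a = \<one>" using P_mult_eq_one(1)[OF T_in_P T_in_P] abc by blast
  then show False using abc by blast
qed

lemma triple_product_factors_in_T:
  "\<forall>a\<in>T. \<forall>b\<in>T. \<forall>c\<in>T. a \<otimes> b \<otimes> c \<in> T \<longrightarrow> a \<otimes> b \<in> T \<and> b \<otimes> c \<in> T"
proof (intro ballI impI conjI)
  fix a b c assume abc: "a \<in> T" "b \<in> T" "c \<in> T" and prod: "a \<otimes> b \<otimes> c \<in> T"
  have "a \<otimes> b \<in> S" using simple_left_factor[of "a \<otimes> b" c] prod abc T_in_P P_mult_closed by blast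
  then show "a \<otimes> b \<in> T" using mult_in_T abc T_in_P by blast
  have "a \<otimes> (b \<otimes> c) \<in> S" using prod abc T_closed by (simp add: m_assoc)
  then have "b \<otimes> c \<in> S" using simple_right_factor abc T_in_P P_mult_closed by blast
  then show "b \<otimes> c \<in> T" using mult_in_T abc T_in_P by blast
qed

end

theorem mainTheorem8:
  fixes G :: "('a, 'b) monoid_scheme" and P :: "'a set" and \<Delta> :: 'a
  assumes "garside_finite_type G P \<Delta>"
  shows "restricted_triangular_presentation G (simples G P \<Delta> - {\<one>\<^bsub>G\<^esub>})
           {[(s, True), (t, True), (s \<otimes>\<^bsub>G\<^esub> t, False)] | s t.
              s \<in> simples G P \<Delta> - {\<one>\<^bsub>G\<^esub>} \<and> t \<in> simples G P \<Delta> - {\<one>\<^bsub>G\<^esub>} \<and>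
              s \<otimes>\<^bsub>G\<^esub> t \<in> simples G P \<Delta>}"
proof -
  interpret garside G P \<Delta>
    using assms by unfold_locales (simp add: garside_finite_type_def)
  have "finite T"
    using assms by (simp add: garside_finite_type_def)
  then show ?thesis
    unfolding restricted_triangular_presentation_def
    by (intro conjI T_subset_carrier T_inv_disjoint relators_triangular presents_T_R
        no_product_of_three_is_one triple_product_factors_in_T)
qed

end
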